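(* Let $\mathcal{I}$ and $\mathcal{F}$ be the sets of initial and final states of the NFA $\mathcal{A}$, and $M=\mathcal{I}\times\mathcal{F}$. For $\mu=(I,F)\in M$ with $F=((d_1,d_2),e_1,e_2,\kappa)$, let $R_\mu$ be the set of words labelling a path in $\mathcal{A}$ from $I$ to $F$, and let $B_\mu=B(d_1,d_2,e_1,e_2)$. Then $\mathcal{H}_\kappa(L_1,L_2)=\bigcup_{\mu\in M}B_\mu^{R_\mu}$, and the sets $B_\mu^{R_\mu}$, $\mu\in M$, are pairwise disjoint. Moreover, for every $\mu\in M$, every $\beta\in B_\mu$ and every $v\in R_\mu$, the minimal gamma-alpha-prefix of $v\beta\bar v$ is $v$.
   Context: $\Sigma$ is a finite alphabet with at least two letters with an involution $a\mapsto\bar a$ ($\bar{\bar a}=a$), extended to words by $\overline{a_1\cdots a_m}=\bar a_m\cdots\bar a_1$ and to languages elementwise. $\kappa$ is a fixed positive integer. $\mathcal{H}_\kappa(L_1,L_2)=\{\gamma\alpha\beta\bar\alpha\bar\gamma:|\alpha|\ge\kappa,\ \gamma\alpha\beta\bar\alpha\in L_1\text{ or }\alpha\beta\bar\alpha\bar\gamma\in L_2\}$. $L_1,L_2\subseteq\Sigma^*$ are regular; $\mathcal{A}_1=(Q_1,\Sigma,E_1,\{q_{01}\},F_1)$ is a complete DFA accepting $L_1$, $\mathcal{A}_2=(Q_2,\Sigma,E_2,\{q_{02}\},F_2)$ a complete DFA accepting $\overline{L_2}$; $p\cdot w$ is the state reached from $p$ on $w$. For $\pi\in\mathcal{H}_\kappa(L_1,L_2)$,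 consider all factorizations $\pi=\gamma\alpha\beta\bar\alpha\bar\gamma$ with $|\alpha|=\kappa$ and ($\gamma\alpha\beta\bar\alpha\in L_1$ or $\alpha\beta\bar\alpha\bar\gamma\in L_2$); the minimal gamma-alpha-prefix of $\pi$ is the word $\gamma\alpha$ for such a factorization with $|\gamma|$ minimal. For languages $B,R$, $B^R=\{v\beta\bar v:\beta\in B,v\in R\}$. Construction of $\mathcal{A}$: $Q_{12}=\{(q_{01}\cdot w,q_{02}\cdot w):w\in\Sigma^*\}$ with $(p_1,p_2)\cdot w=(p_1\cdot w,p_2\cdot w)$. For $(p_1,p_2,q_1,q_2)\in Q_1\times Q_2\times Q_1\times Q_2$ let $B(p_1,p_2,q_1,q_2)=\{w\in\Sigma^*:p_1\cdot w=q_1,\ p_2\cdot\bar w=q_2\}$; the quadruple is a basic bridge if this set is nonempty. The states of $\mathcal{A}$ (called bridges) are all $((p_1,p_2),q_1,q_2,\ell)$ with $(p_1,p_2)\in Q_{12}$, $q_i\in Q_i$, $\ell\in\{0,\dots,\kappa\}$ such that $(p_1,p_2,q_1,q_2)$ is a basic bridge. For $a\in\Sigma$, $P\in Q_{12}$, $q_1\in Q_1,q_2\in Q_2$, there is an $a$-labelled arc from $(P,q_1\cdot\bar a,q_2\cdot\bar a,\ell)$ to $(P\cdot a,q_1,q_2,\ell')$, provided both are states, exactly in the cases: $\ell=\ell'=0$ and $q_1\cdot\bar a\notin F_1$, $q_2\cdot\bar a\notin F_2$; or $\ell=0,\ell'=1$ and ($q_1\cdot\bar a\in F_1$ or $q_2\cdot\bar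 a\in F_2$); or $1\le\ell<\kappa$ and $\ell'=\ell+1$. Initial states are those of the form $((q_{01},q_{02}),q_1',q_2',0)$; final states are those with $\ell=\kappa$. *)

theory Defs
  imports Main "HOL-Library.Disjoint_Sets"
begin

definition wbar :: "('a \<Rightarrow> 'a) \<Rightarrow> 'a list \<Rightarrow> 'a list" where
  "wbar bar w = rev (map bar w)"

section \<open>Complete DFAs: (transition function, initial state, final states); state set = UNIV\<close>

type_synonym ('q, 'a) dfa = "('q \<Rightarrow> 'a \<Rightarrow> 'q) \<times> 'q \<times> 'q set"

definition run :: "('q \<Rightarrow> 'a \<Rightarrow> 'q) \<Rightarrow> 'q \<Rightarrow> 'a list \<Rightarrow> 'q" where
  "run d p w = foldl d p w"

definition lang :: "('q, 'a) dfa \<Rightarrow> 'a list set" where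
  "lang A = (case A of (d, q0, F) \<Rightarrow> {w. run d q0 w \<in> F})"

definition Hk :: "('a \<Rightarrow> 'a) \<Rightarrow> nat \<Rightarrow> 'a list set \<Rightarrow> 'a list set \<Rightarrow> 'a list set" where
  "Hk bar \<kappa> L1 L2 = {\<gamma> @ \<alpha> @ \<beta> @ wbar bar \<alpha> @ wbar bar \<gamma> | \<gamma> \<alpha> \<beta>.
      length \<alpha> \<ge> \<kappa> \<and> (\<gamma> @ \<alpha> @ \<beta> @ wbar bar \<alpha> \<in> L1 \<or> \<alpha> @ \<beta> @ wbar bar \<alpha> @ wbar bar \<gamma> \<in> L2)}"

definition valid_fact :: "('a \<Rightarrow> 'a) \<Rightarrow> nat \<Rightarrow> 'a list set \<Rightarrow> 'a list set \<Rightarrow> 'a list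
    \<Rightarrow> 'a list \<Rightarrow> 'a list \<Rightarrow> 'a list \<Rightarrow> bool" where
  "valid_fact bar \<kappa> L1 L2 \<pi> \<gamma> \<alpha> \<beta> \<longleftrightarrow>
     \<pi> = \<gamma> @ \<alpha> @ \<beta> @ wbar bar \<alpha> @ wbar bar \<gamma> \<and> length \<alpha> = \<kappa> \<and>
     (\<gamma> @ \<alpha> @ \<beta> @ wbar bar \<alpha> \<in> L1 \<or> \<alpha> @ \<beta> @ wbar bar \<alpha> @ wbar bar \<gamma> \<in> L2)"

definition min_gap :: "('a \<Rightarrow> 'a) \<Rightarrow> nat \<Rightarrow> 'a list set \<Rightarrow> 'a list set \<Rightarrow> 'a list \<Rightarrow> 'a list" where
  "min_gap bar \<kappa> L1 L2 \<pi> = (SOME u. \<exists>\<gamma> \<alpha> \<beta>. valid_fact bar \<kappa> L1 L2 \<pi> \<gamma> \<alpha> \<beta> \<and> u = \<gamma> @ \<alpha> \<and>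
      (\<forall>\<gamma>' \<alpha>' \<beta>'. valid_fact bar \<kappa> L1 L2 \<pi> \<gamma>' \<alpha>' \<beta>' \<longrightarrow> length \<gamma> \<le> length \<gamma>'))"

section \<open>The construction of the NFA A (bridges)\<close>

definition Q12 :: "('q1, 'a) dfa \<Rightarrow> ('q2, 'a) dfa \<Rightarrow> ('q1 \<times> 'q2) set" where
  "Q12 A1 A2 = {(run (fst A1) (fst (snd A1)) w, run (fst A2) (fst (snd A2)) w) | w. True}"

definition Bset :: "('a \<Rightarrow> 'a) \<Rightarrow> ('q1, 'a) dfa \<Rightarrow> ('q2, 'a) dfa \<Rightarrow> 'q1 \<Rightarrow> 'q2 \<Rightarrow> 'q1 \<Rightarrow> 'q2
    \<Rightarrow> 'a list set" where
  "Bset bar A1 A2 p1 p2 q1 q2 =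
     {w. run (fst A1) p1 w = q1 \<and> run (fst A2) p2 (wbar bar w) = q2}"

type_synonym ('q1, 'q2) bridge = "('q1 \<times> 'q2) \<times> 'q1 \<times> 'q2 \<times> nat"

definition is_bridge :: "('a \<Rightarrow> 'a) \<Rightarrow> nat \<Rightarrow> ('q1, 'a) dfa \<Rightarrow> ('q2, 'a) dfa
    \<Rightarrow> ('q1, 'q2) bridge \<Rightarrow> bool" where
  "is_bridge bar \<kappa> A1 A2 s = (case s of ((p1, p2), q1, q2, l) \<Rightarrow>
      (p1, p2) \<in> Q12 A1 A2 \<and> Bset bar A1 A2 p1 p2 q1 q2 \<noteq> {} \<and> l \<le> \<kappa>)"

definition arc :: "('a \<Rightarrow> 'a) \<Rightarrow> nat \<Rightarrow> ('q1, 'a) dfa \<Rightarrow> ('q2, 'a) dfa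
    \<Rightarrow> ('q1, 'q2) bridge \<Rightarrow> 'a \<Rightarrow> ('q1, 'q2) bridge \<Rightarrow> bool" where
  "arc bar \<kappa> A1 A2 s a t \<longleftrightarrow>
     is_bridge bar \<kappa> A1 A2 s \<and> is_bridge bar \<kappa> A1 A2 t \<and>
     (\<exists>p1 p2 q1 q2 l l'.
        s = ((p1, p2), fst A1 q1 (bar a), fst A2 q2 (bar a), l) \<and>
        t = ((fst A1 p1 a, fst A2 p2 a), q1, q2, l') \<and>
        ((l = 0 \<and> l' = 0 \<and> fst A1 q1 (bar a) \<notin> snd (snd A1) \<and> fst A2 q2 (bar a) \<notin> snd (snd A2)) \<or>
         (l = 0 \<and> l' = 1 \<and> (fst A1 q1 (bar a) \<in> snd (snd A1) \<or> fst A2 q2 (bar a) \<in> snd (snd A2))) \<or>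
         (1 \<le> l \<and> l < \<kappa> \<and> l' = l + 1)))"

fun apath :: "('a \<Rightarrow> 'a) \<Rightarrow> nat \<Rightarrow> ('q1, 'a) dfa \<Rightarrow> ('q2, 'a) dfa
    \<Rightarrow> ('q1, 'q2) bridge \<Rightarrow> 'a list \<Rightarrow> ('q1, 'q2) bridge \<Rightarrow> bool" where
  "apath bar \<kappa> A1 A2 s [] t \<longleftrightarrow> s = t"
| "apath bar \<kappa> A1 A2 s (a # w) t \<longleftrightarrow> (\<exists>s'. arc bar \<kappa> A1 A2 s a s' \<and> apath bar \<kappa> A1 A2 s' w t)"

definition init_states :: "('a \<Rightarrow> 'a) \<Rightarrow> nat \<Rightarrow> ('q1, 'a) dfa \<Rightarrow> ('q2, 'a) dfa
    \<Rightarrow> ('q1, 'q2) bridge set" where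
  "init_states bar \<kappa> A1 A2 = {s. is_bridge bar \<kappa> A1 A2 s \<and>
      (\<exists>q1 q2. s = ((fst (snd A1), fst (snd A2)), q1, q2, 0))}"

definition final_states :: "('a \<Rightarrow> 'a) \<Rightarrow> nat \<Rightarrow> ('q1, 'a) dfa \<Rightarrow> ('q2, 'a) dfa
    \<Rightarrow> ('q1, 'q2) bridge set" where
  "final_states bar \<kappa> A1 A2 = {s. is_bridge bar \<kappa> A1 A2 s \<and> snd (snd (snd s)) = \<kappa>}"

definition Rmu :: "('a \<Rightarrow> 'a) \<Rightarrow> nat \<Rightarrow> ('q1, 'a) dfa \<Rightarrow> ('q2, 'a) dfa
    \<Rightarrow> ('q1, 'q2) bridge \<times> ('q1, 'q2) bridge \<Rightarrow> 'a list set" where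
  "Rmu bar \<kappa> A1 A2 \<mu> = {w. apath bar \<kappa> A1 A2 (fst \<mu>) w (snd \<mu>)}"

definition Bmu :: "('a \<Rightarrow> 'a) \<Rightarrow> ('q1, 'a) dfa \<Rightarrow> ('q2, 'a) dfa
    \<Rightarrow> ('q1, 'q2) bridge \<times> ('q1, 'q2) bridge \<Rightarrow> 'a list set" where
  "Bmu bar A1 A2 \<mu> = (case snd \<mu> of ((d1, d2), e1, e2, _) \<Rightarrow> Bset bar A1 A2 d1 d2 e1 e2)"

definition Bpow :: "('a \<Rightarrow> 'a) \<Rightarrow> 'a list set \<Rightarrow> 'a list set \<Rightarrow> 'a list set" where
  "Bpow bar B R = {v @ \<beta> @ wbar bar v | \<beta> v. \<beta> \<in> B \<and> v \<in> R}"

end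

theory Submission
  imports Defs
begin

text \<open>Write \<open>\<pi> = v \<beta> v\<^sup>R\<close> with \<open>v\<^sup>R = wbar bar v\<close>. The factorization of \<open>\<pi>\<close> with \<open>\<gamma> = take j v\<close> is
  admissible iff \<open>A\<^sub>1\<close> accepts \<open>v \<beta> (drop j v)\<^sup>R\<close> or \<open>A\<^sub>2\<close> accepts \<open>v \<beta>\<^sup>R (drop j v)\<^sup>R\<close>. A path of \<open>\<A>\<close>
  labelled \<open>v\<close> that ends in a bridge whose set \<open>B\<close> contains \<open>\<beta>\<close> runs the DFAs forward on \<open>v\<close> in
  its first components and backward from the states reached after \<open>v \<beta>\<close> and \<open>v \<beta>\<^sup>R\<close> in the
  other two, so
  at the \<open>j\<close>-th letter it sees exactly whether cut \<open>j\<close> is admissible; the level counter leaves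
  0 at the first admissible cut and then counts \<open>\<kappa>\<close> letters. Hence such a path from an initial
  to a final bridge exists iff \<open>v\<close> is the minimal gamma-alpha-prefix of \<open>\<pi>\<close>, and its end
  bridges are determined by \<open>v\<close> and \<open>\<beta>\<close>. Disjointness follows: \<open>\<pi>\<close> determines \<open>v\<close>, hence \<open>\<beta>\<close>,
  hence the pair of bridges.\<close>

lemma run_Nil [simp]: "run d p [] = p"
  by (simp add: run_def)

lemma run_Cons [simp]: "run d p (a # w) = run d (d p a) w"
  by (simp add: run_def)

lemma run_append [simp]: "run d p (u @ w) = run d (run d p u) w"
  by (simp add: run_def)

lemma wbar_Nil [simp]: "wbar bar [] = []"
  by (simp add: wbar_def)

lemma wbar_Cons [simp]: "wbar bar (a # w) = wbar bar w @ [bar a]"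
  by (simp add: wbar_def)

lemma wbar_append [simp]: "wbar bar (u @ w) = wbar bar w @ wbar bar u"
  by (simp add: wbar_def)

lemma length_wbar [simp]: "length (wbar bar w) = length w"
  by (simp add: wbar_def)

lemma wbar_wbar: "(\<And>a. bar (bar a) = a) \<Longrightarrow> wbar bar (wbar bar w) = w"
  by (induction w) auto

lemma wbar_mem_image_iff:
  assumes "\<And>a. bar (bar a) = a"
  shows "wbar bar w \<in> wbar bar ` L \<longleftrightarrow> w \<in> L"
proof -
  have "inj (wbar bar)"
    by (metis injI wbar_wbar[OF assms])
  then show ?thesis
    by (rule inj_image_mem_iff)
qed

lemma ex_valid_fact_iff:
  "(\<exists>\<alpha> \<beta>'. valid_fact bar \<kappa> L1 L2 \<pi> \<gamma> \<alpha> \<beta>') \<longleftrightarrow>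
    (\<exists>c. \<pi> = \<gamma> @ c @ wbar bar \<gamma> \<and> (\<exists>\<alpha> \<beta>'. c = \<alpha> @ \<beta>' @ wbar bar \<alpha> \<and> length \<alpha> = \<kappa>) \<and>
      (\<gamma> @ c \<in> L1 \<or> c @ wbar bar \<gamma> \<in> L2))"
  unfolding valid_fact_def by fastforce

lemma hairpin_take:
  "\<kappa> \<le> length u \<Longrightarrow> u @ \<beta> @ wbar bar u = take \<kappa> u @ (drop \<kappa> u @ \<beta> @ wbar bar (drop \<kappa> u)) @ wbar bar (take \<kappa> u)"
  by (metis append_take_drop_id append.assoc wbar_append)

lemma valid_fact_take_iff:
  assumes "j + \<kappa> \<le> length v"
  shows "(\<exists>\<alpha> \<beta>'. valid_fact bar \<kappa> L1 L2 (v @ \<beta> @ wbar bar v) (take j v) \<alpha> \<beta>') \<longleftrightarrow>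
    v @ \<beta> @ wbar bar (drop j v) \<in> L1 \<or> drop j v @ \<beta> @ wbar bar v \<in> L2"
proof -
  let ?c = "drop j v @ \<beta> @ wbar bar (drop j v)"
  have split: "v @ \<beta> @ wbar bar v = take j v @ ?c @ wbar bar (take j v)"
    by (metis append_take_drop_id append.assoc wbar_append)
  have cancel: "take j v @ ?c @ wbar bar (take j v) = take j v @ c @ wbar bar (take j v) \<longleftrightarrow> c = ?c"
    for c by auto
  have "\<exists>\<alpha> \<beta>'. ?c = \<alpha> @ \<beta>' @ wbar bar \<alpha> \<and> length \<alpha> = \<kappa>"
    using hairpin_take[of \<kappa> "drop j v" \<beta> bar] assms by fastforce
  moreover have "take j v @ ?c = v @ \<beta> @ wbar bar (drop j v)"
    by (metis append_take_drop_id append.assoc)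
  moreover have "?c @ wbar bar (take j v) = drop j v @ \<beta> @ wbar bar v"
    by (metis append_take_drop_id append.assoc wbar_append)
  ultimately show ?thesis
    unfolding ex_valid_fact_iff split cancel by (simp only: simp_thms)
qed

definition min_gap_prefix :: "('a \<Rightarrow> 'a) \<Rightarrow> nat \<Rightarrow> 'a list set \<Rightarrow> 'a list set \<Rightarrow> 'a list
    \<Rightarrow> 'a list \<Rightarrow> bool" where
  "min_gap_prefix bar \<kappa> L1 L2 v \<beta> \<longleftrightarrow> \<kappa> \<le> length v \<and>
     (\<forall>j \<le> length v - \<kappa>. (\<exists>\<alpha> \<beta>'. valid_fact bar \<kappa> L1 L2 (v @ \<beta> @ wbar bar v) (take j v) \<alpha> \<beta>') \<longleftrightarrow>
        j = length v - \<kappa>)"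

lemma valid_fact_take:
  assumes "valid_fact bar \<kappa> L1 L2 \<pi> \<gamma> \<alpha> \<beta>"
  shows "\<gamma> = take (length \<gamma>) \<pi>" and "\<gamma> @ \<alpha> = take (length \<gamma> + \<kappa>) \<pi>"
  using assms by (auto simp: valid_fact_def)

lemma valid_fact_Hk: "valid_fact bar \<kappa> L1 L2 \<pi> \<gamma> \<alpha> \<beta> \<Longrightarrow> \<pi> \<in> Hk bar \<kappa> L1 L2"
  unfolding valid_fact_def Hk_def by fastforce

lemma min_gap_prefix_valid_fact:
  assumes "min_gap_prefix bar \<kappa> L1 L2 v \<beta>"
  obtains \<alpha> \<beta>' where "valid_fact bar \<kappa> L1 L2 (v @ \<beta> @ wbar bar v) (take (length v - \<kappa>) v) \<alpha> \<beta>'"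
  using assms unfolding min_gap_prefix_def by blast

lemma min_gap_prefix_Hk: "min_gap_prefix bar \<kappa> L1 L2 v \<beta> \<Longrightarrow> v @ \<beta> @ wbar bar v \<in> Hk bar \<kappa> L1 L2"
  by (metis min_gap_prefix_valid_fact valid_fact_Hk)

lemma min_gap_eqI:
  assumes min: "min_gap_prefix bar \<kappa> L1 L2 v \<beta>"
  shows "min_gap bar \<kappa> L1 L2 (v @ \<beta> @ wbar bar v) = v"
proof -
  let ?\<pi> = "v @ \<beta> @ wbar bar v" and ?n = "length v - \<kappa>"
  have \<kappa>: "\<kappa> \<le> length v"
    using min by (simp add: min_gap_prefix_def)
  have lower: "?n \<le> length \<gamma>" if "valid_fact bar \<kappa> L1 L2 ?\<pi> \<gamma> \<alpha> \<beta>'" for \<gamma> \<alpha> \<beta>'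
  proof (rule ccontr)
    assume short: "\<not> ?n \<le> length \<gamma>"
    then have "\<gamma> = take (length \<gamma>) v"
      using valid_fact_take(1)[OF that] by simp
    then have "\<exists>\<alpha> \<beta>'. valid_fact bar \<kappa> L1 L2 ?\<pi> (take (length \<gamma>) v) \<alpha> \<beta>'"
      using that by (subst (asm) (1) \<open>\<gamma> = _\<close>) blast
    moreover have "length \<gamma> \<le> ?n"
      using short by simp
    ultimately have "length \<gamma> = ?n"
      using min unfolding min_gap_prefix_def by blast
    with short show False by simp
  qed
  have prefix: "\<gamma> @ \<alpha> = v" if "valid_fact bar \<kappa> L1 L2 ?\<pi> \<gamma> \<alpha> \<beta>'" "length \<gamma> = ?n" for \<gamma> \<alpha> \<beta>'
    using valid_fact_take(2)[OF that(1)] that(2) \<kappa> by simp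
  obtain \<alpha>0 \<beta>0 where witness: "valid_fact bar \<kappa> L1 L2 ?\<pi> (take ?n v) \<alpha>0 \<beta>0"
    using min by (rule min_gap_prefix_valid_fact)
  show ?thesis
    unfolding min_gap_def
  proof (rule someI2)
    show "\<exists>\<gamma> \<alpha> \<beta>'. valid_fact bar \<kappa> L1 L2 ?\<pi> \<gamma> \<alpha> \<beta>' \<and> v = \<gamma> @ \<alpha> \<and>
        (\<forall>\<gamma>' \<alpha>' \<beta>''. valid_fact bar \<kappa> L1 L2 ?\<pi> \<gamma>' \<alpha>' \<beta>'' \<longrightarrow> length \<gamma> \<le> length \<gamma>')"
      using witness prefix[OF witness] lower \<kappa>
      by (intro exI[of _ "take ?n v"] exI[of _ \<alpha>0] exI[of _ \<beta>0]) auto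
  next
    fix u
    assume "\<exists>\<gamma> \<alpha> \<beta>'. valid_fact bar \<kappa> L1 L2 ?\<pi> \<gamma> \<alpha> \<beta>' \<and> u = \<gamma> @ \<alpha> \<and>
        (\<forall>\<gamma>' \<alpha>' \<beta>''. valid_fact bar \<kappa> L1 L2 ?\<pi> \<gamma>' \<alpha>' \<beta>'' \<longrightarrow> length \<gamma> \<le> length \<gamma>')"
    then obtain \<gamma> \<alpha> \<beta>' where fact: "valid_fact bar \<kappa> L1 L2 ?\<pi> \<gamma> \<alpha> \<beta>'" and u: "u = \<gamma> @ \<alpha>"
      and "length \<gamma> \<le> length (take ?n v)"
      using witness by blast
    then have "length \<gamma> = ?n"
      using lower[OF fact] by simp
    with prefix[OF fact] u show "u = v"
      by simp
  qed
qed

lemma Hk_min_gap_prefix: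
  assumes "\<pi> \<in> Hk bar \<kappa> L1 L2"
  obtains v \<beta> where "\<pi> = v @ \<beta> @ wbar bar v" and "min_gap_prefix bar \<kappa> L1 L2 v \<beta>"
proof -
  obtain \<gamma> \<alpha> \<beta> where \<pi>: "\<pi> = \<gamma> @ \<alpha> @ \<beta> @ wbar bar \<alpha> @ wbar bar \<gamma>" and "\<kappa> \<le> length \<alpha>"
    and "\<gamma> @ \<alpha> @ \<beta> @ wbar bar \<alpha> \<in> L1 \<or> \<alpha> @ \<beta> @ wbar bar \<alpha> @ wbar bar \<gamma> \<in> L2"
    using assms unfolding Hk_def by blast
  moreover have "\<alpha> @ \<beta> @ wbar bar \<alpha> = take \<kappa> \<alpha> @ (drop \<kappa> \<alpha> @ \<beta> @ wbar bar (drop \<kappa> \<alpha>)) @ wbar bar (take \<kappa> \<alpha>)"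
    using \<open>\<kappa> \<le> length \<alpha>\<close> by (rule hairpin_take)
  ultimately have "valid_fact bar \<kappa> L1 L2 \<pi> \<gamma> (take \<kappa> \<alpha>) (drop \<kappa> \<alpha> @ \<beta> @ wbar bar (drop \<kappa> \<alpha>))"
    unfolding valid_fact_def by (metis append.assoc length_take min_absorb2)
  then have "\<exists>n \<gamma> \<alpha> \<beta>. valid_fact bar \<kappa> L1 L2 \<pi> \<gamma> \<alpha> \<beta> \<and> length \<gamma> = n"
    by blast
  then obtain n \<gamma>0 \<alpha>0 \<beta>0 where fact0: "valid_fact bar \<kappa> L1 L2 \<pi> \<gamma>0 \<alpha>0 \<beta>0" "length \<gamma>0 = n"
    and below: "\<forall>m < n. \<not> (\<exists>\<gamma> \<alpha> \<beta>. valid_fact bar \<kappa> L1 L2 \<pi> \<gamma> \<alpha> \<beta> \<and> length \<gamma> = m)"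
    unfolding exists_least_iff[where P = "\<lambda>n. \<exists>\<gamma> \<alpha> \<beta>. valid_fact bar \<kappa> L1 L2 \<pi> \<gamma> \<alpha> \<beta> \<and> length \<gamma> = n"]
    by blast
  have least0: "length \<gamma>0 \<le> length \<gamma>" if "valid_fact bar \<kappa> L1 L2 \<pi> \<gamma> \<alpha> \<beta>" for \<gamma> \<alpha> \<beta>
    using below that fact0(2) not_le by blast
  define v where "v = \<gamma>0 @ \<alpha>0"
  have \<pi>v: "\<pi> = v @ \<beta>0 @ wbar bar v" and lv: "length v = length \<gamma>0 + \<kappa>"
    using fact0(1) unfolding v_def valid_fact_def by auto
  have "min_gap_prefix bar \<kappa> L1 L2 v \<beta>0"
    unfolding min_gap_prefix_def
  proof (intro conjI allI impI)
    fix j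
    assume j: "j \<le> length v - \<kappa>"
    show "(\<exists>\<alpha> \<beta>'. valid_fact bar \<kappa> L1 L2 (v @ \<beta>0 @ wbar bar v) (take j v) \<alpha> \<beta>') \<longleftrightarrow> j = length v - \<kappa>"
    proof
      assume "\<exists>\<alpha> \<beta>'. valid_fact bar \<kappa> L1 L2 (v @ \<beta>0 @ wbar bar v) (take j v) \<alpha> \<beta>'"
      then have "length \<gamma>0 \<le> length (take j v)"
        using least0 unfolding \<pi>v by blast
      with j lv show "j = length v - \<kappa>"
        by simp
    next
      assume "j = length v - \<kappa>"
      then have "take j v = \<gamma>0"
        using lv by (simp add: v_def)
      then show "\<exists>\<alpha> \<beta>'. valid_fact bar \<kappa> L1 L2 (v @ \<beta>0 @ wbar bar v) (take j v) \<alpha> \<beta>'"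
        using fact0(1) unfolding \<pi>v by blast
    qed
  qed (use lv in simp)
  with \<pi>v show ?thesis
    using that by blast
qed

lemma min_gap_prefix_unique:
  assumes "min_gap_prefix bar \<kappa> L1 L2 v \<beta>" and "min_gap_prefix bar \<kappa> L1 L2 v' \<beta>'"
    and "v @ \<beta> @ wbar bar v = v' @ \<beta>' @ wbar bar v'"
  shows "v = v'" and "\<beta> = \<beta>'"
proof -
  show "v = v'"
    using min_gap_eqI[OF assms(1)] min_gap_eqI[OF assms(2)] assms(3) by simp
  with assms(3) show "\<beta> = \<beta>'"
    by simp
qed

lemma lang_eq: "lang A = {w. run (fst A) (fst (snd A)) w \<in> snd (snd A)}"
  by (cases A) (simp add: lang_def)

lemma Q12_init: "(fst (snd A1), fst (snd A2)) \<in> Q12 A1 A2"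
  unfolding Q12_def by (auto intro!: exI[of _ "[]"])

lemma Q12_run: "(p1, p2) \<in> Q12 A1 A2 \<Longrightarrow> (run (fst A1) p1 w, run (fst A2) p2 w) \<in> Q12 A1 A2"
  unfolding Q12_def by (auto simp flip: run_append)

lemma Q12_step: "(p1, p2) \<in> Q12 A1 A2 \<Longrightarrow> (fst A1 p1 a, fst A2 p2 a) \<in> Q12 A1 A2"
  using Q12_run[of p1 p2 A1 A2 "[a]"] by simp

lemma Bset_eq: "x \<in> Bset bar A1 A2 p1 p2 q1 q2 \<longleftrightarrow>
    q1 = run (fst A1) p1 x \<and> q2 = run (fst A2) p2 (wbar bar x)"
  by (auto simp: Bset_def)

lemma is_bridge_run:
  assumes "\<And>a. bar (bar a) = a" and "(p1, p2) \<in> Q12 A1 A2" and "l \<le> \<kappa>"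
    and "x \<in> Bset bar A1 A2 (run (fst A1) p1 w) (run (fst A2) p2 w) e1 e2"
  shows "is_bridge bar \<kappa> A1 A2
    ((p1, p2), run (fst A1) e1 (wbar bar w), run (fst A2) e2 (wbar bar w), l)"
proof -
  have "w @ x @ wbar bar w \<in>
      Bset bar A1 A2 p1 p2 (run (fst A1) e1 (wbar bar w)) (run (fst A2) e2 (wbar bar w))"
    using assms(1,4) by (simp add: Bset_def wbar_wbar)
  then show ?thesis
    using assms(2,3) by (auto simp: is_bridge_def)
qed

lemma arc_iff:
  "arc bar \<kappa> A1 A2 ((p1, p2), q1, q2, l) a ((r1, r2), e1, e2, l') \<longleftrightarrow>
    is_bridge bar \<kappa> A1 A2 ((p1, p2), q1, q2, l) \<and> is_bridge bar \<kappa> A1 A2 ((r1, r2), e1, e2, l') \<and>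
    r1 = fst A1 p1 a \<and> r2 = fst A2 p2 a \<and> q1 = fst A1 e1 (bar a) \<and> q2 = fst A2 e2 (bar a) \<and>
    (if l = 0 then l' = (if q1 \<in> snd (snd A1) \<or> q2 \<in> snd (snd A2) then 1 else 0)
     else l < \<kappa> \<and> l' = Suc l)"
  by (auto simp: arc_def)

lemma apath_Cons_iff:
  "apath bar \<kappa> A1 A2 ((p1, p2), q1, q2, l) (a # w) t \<longleftrightarrow>
    (\<exists>e1 e2 l'. arc bar \<kappa> A1 A2 ((p1, p2), q1, q2, l) a ((fst A1 p1 a, fst A2 p2 a), e1, e2, l') \<and>
      apath bar \<kappa> A1 A2 ((fst A1 p1 a, fst A2 p2 a), e1, e2, l') w t)"
  by (auto simp: arc_iff)

text \<open>Cut \<open>j\<close> of a path label \<open>w\<close>, seen from the exit states \<open>e1\<close>, \<open>e2\<close>: it is tested by the arc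
  reading the \<open>j\<close>-th letter of \<open>w\<close>.\<close>
definition accepting_cut :: "('a \<Rightarrow> 'a) \<Rightarrow> ('q1, 'a) dfa \<Rightarrow> ('q2, 'a) dfa \<Rightarrow> 'q1 \<Rightarrow> 'q2
    \<Rightarrow> 'a list \<Rightarrow> nat \<Rightarrow> bool" where
  "accepting_cut bar A1 A2 e1 e2 w j \<longleftrightarrow>
     run (fst A1) e1 (wbar bar (drop j w)) \<in> snd (snd A1) \<or>
     run (fst A2) e2 (wbar bar (drop j w)) \<in> snd (snd A2)"

lemma accepting_cut_Cons_0:
  "accepting_cut bar A1 A2 e1 e2 (a # w) 0 \<longleftrightarrow>
    fst A1 (run (fst A1) e1 (wbar bar w)) (bar a) \<in> snd (snd A1) \<or>
    fst A2 (run (fst A2) e2 (wbar bar w)) (bar a) \<in> snd (snd A2)"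
  by (simp add: accepting_cut_def)

lemma accepting_cut_Cons_Suc [simp]:
  "accepting_cut bar A1 A2 e1 e2 (a # w) (Suc j) = accepting_cut bar A1 A2 e1 e2 w j"
  by (simp add: accepting_cut_def)

lemma apath_states:
  "apath bar \<kappa> A1 A2 ((p1, p2), q1, q2, l) w ((r1, r2), e1, e2, l') \<Longrightarrow>
    r1 = run (fst A1) p1 w \<and> r2 = run (fst A2) p2 w \<and>
    q1 = run (fst A1) e1 (wbar bar w) \<and> q2 = run (fst A2) e2 (wbar bar w)"
proof (induction w arbitrary: p1 p2 q1 q2 l)
  case (Cons a w)
  then show ?case
    by (auto simp: apath_Cons_iff arc_iff)
qed simp

lemma apath_level_Suc:
  "apath bar \<kappa> A1 A2 ((p1, p2), q1, q2, Suc l) w ((r1, r2), e1, e2, l') \<Longrightarrow> l' = Suc l + length w"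
proof (induction w arbitrary: p1 p2 q1 q2 l)
  case (Cons a w)
  then show ?case
    by (fastforce simp: apath_Cons_iff arc_iff)
qed simp

lemma apath_level_0:
  assumes "apath bar \<kappa> A1 A2 ((p1, p2), q1, q2, 0) w ((r1, r2), e1, e2, \<kappa>)" and "0 < \<kappa>"
  shows "\<kappa> \<le> length w \<and>
    (\<forall>j \<le> length w - \<kappa>. accepting_cut bar A1 A2 e1 e2 w j \<longleftrightarrow> j = length w - \<kappa>)"
  using assms(1)
proof (induction w arbitrary: p1 p2 q1 q2)
  case Nil
  with assms(2) show ?case by simp
next
  case (Cons a w)
  from Cons.prems obtain q1' q2' l' where
    arc: "arc bar \<kappa> A1 A2 ((p1, p2), q1, q2, 0) a ((fst A1 p1 a, fst A2 p2 a), q1', q2', l')" and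
    path: "apath bar \<kappa> A1 A2 ((fst A1 p1 a, fst A2 p2 a), q1', q2', l') w ((r1, r2), e1, e2, \<kappa>)"
    unfolding apath_Cons_iff by blast
  have q: "q1' = run (fst A1) e1 (wbar bar w)" "q2' = run (fst A2) e2 (wbar bar w)"
    using apath_states[OF path] by auto
  have step: "l' = (if accepting_cut bar A1 A2 e1 e2 (a # w) 0 then 1 else 0)"
    using arc q by (simp add: arc_iff accepting_cut_Cons_0)
  show ?case
  proof (cases "accepting_cut bar A1 A2 e1 e2 (a # w) 0")
    case True
    then have "\<kappa> = Suc (length w)"
      using apath_level_Suc[of bar \<kappa> A1 A2 _ _ _ _ 0] path step by simp
    with True show ?thesis by simp
  next
    case False
    with step path Cons.IH have \<kappa>: "\<kappa> \<le> length w"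
      and cut: "\<forall>j \<le> length w - \<kappa>. accepting_cut bar A1 A2 e1 e2 w j \<longleftrightarrow> j = length w - \<kappa>"
      by simp_all
    have "accepting_cut bar A1 A2 e1 e2 (a # w) j \<longleftrightarrow> j = length (a # w) - \<kappa>"
      if "j \<le> length (a # w) - \<kappa>" for j
      using that False \<kappa> cut by (cases j) (auto simp: Suc_diff_le)
    with \<kappa> show ?thesis by simp
  qed
qed

lemma apath_level_SucI:
  assumes inv: "\<And>a. bar (bar a) = a"
  shows "(p1, p2) \<in> Q12 A1 A2 \<Longrightarrow> Suc l + length w \<le> \<kappa> \<Longrightarrow>
    x \<in> Bset bar A1 A2 (run (fst A1) p1 w) (run (fst A2) p2 w) e1 e2 \<Longrightarrow>
    apath bar \<kappa> A1 A2 ((p1, p2), run (fst A1) e1 (wbar bar w), run (fst A2) e2 (wbar bar w), Suc l) w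
      ((run (fst A1) p1 w, run (fst A2) p2 w), e1, e2, Suc l + length w)"
proof (induction w arbitrary: p1 p2 l)
  case (Cons a w)
  let ?p1 = "fst A1 p1 a" and ?p2 = "fst A2 p2 a"
  have Q: "(?p1, ?p2) \<in> Q12 A1 A2"
    using Cons.prems(1) by (rule Q12_step)
  have "arc bar \<kappa> A1 A2 ((p1, p2), run (fst A1) e1 (wbar bar (a # w)), run (fst A2) e2 (wbar bar (a # w)), Suc l) a
      ((?p1, ?p2), run (fst A1) e1 (wbar bar w), run (fst A2) e2 (wbar bar w), Suc (Suc l))"
    using Cons.prems is_bridge_run[OF inv Cons.prems(1) _ Cons.prems(3)]
      is_bridge_run[OF inv Q, of "Suc (Suc l)" \<kappa> x w e1 e2]
    by (simp add: arc_iff)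
  moreover have "apath bar \<kappa> A1 A2 ((?p1, ?p2), run (fst A1) e1 (wbar bar w), run (fst A2) e2 (wbar bar w), Suc (Suc l)) w
      ((run (fst A1) p1 (a # w), run (fst A2) p2 (a # w)), e1, e2, Suc l + length (a # w))"
    using Cons.IH[OF Q, of "Suc l"] Cons.prems(2,3) by simp
  ultimately show ?case
    unfolding apath_Cons_iff by blast
qed simp

lemma apath_level_0I:
  assumes inv: "\<And>a. bar (bar a) = a" and "0 < \<kappa>"
  shows "(p1, p2) \<in> Q12 A1 A2 \<Longrightarrow> \<kappa> \<le> length w \<Longrightarrow>
    (\<forall>j \<le> length w - \<kappa>. accepting_cut bar A1 A2 e1 e2 w j \<longleftrightarrow> j = length w - \<kappa>) \<Longrightarrow>
    x \<in> Bset bar A1 A2 (run (fst A1) p1 w) (run (fst A2) p2 w) e1 e2 \<Longrightarrow>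
    apath bar \<kappa> A1 A2 ((p1, p2), run (fst A1) e1 (wbar bar w), run (fst A2) e2 (wbar bar w), 0) w
      ((run (fst A1) p1 w, run (fst A2) p2 w), e1, e2, \<kappa>)"
proof (induction w arbitrary: p1 p2)
  case (Cons a w)
  let ?p1 = "fst A1 p1 a" and ?p2 = "fst A2 p2 a"
    and ?l = "if accepting_cut bar A1 A2 e1 e2 (a # w) 0 then 1 else 0"
  have Q: "(?p1, ?p2) \<in> Q12 A1 A2"
    using Cons.prems(1) by (rule Q12_step)
  have x: "x \<in> Bset bar A1 A2 (run (fst A1) ?p1 w) (run (fst A2) ?p2 w) e1 e2"
    using Cons.prems(4) by simp
  have "arc bar \<kappa> A1 A2 ((p1, p2), run (fst A1) e1 (wbar bar (a # w)), run (fst A2) e2 (wbar bar (a # w)), 0) a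
      ((?p1, ?p2), run (fst A1) e1 (wbar bar w), run (fst A2) e2 (wbar bar w), ?l)"
    using is_bridge_run[OF inv Cons.prems(1) _ Cons.prems(4)] is_bridge_run[OF inv Q _ x] \<open>0 < \<kappa>\<close>
    by (simp add: arc_iff accepting_cut_Cons_0)
  moreover have "apath bar \<kappa> A1 A2 ((?p1, ?p2), run (fst A1) e1 (wbar bar w), run (fst A2) e2 (wbar bar w), ?l) w
      ((run (fst A1) p1 (a # w), run (fst A2) p2 (a # w)), e1, e2, \<kappa>)"
  proof (cases "accepting_cut bar A1 A2 e1 e2 (a # w) 0")
    case True
    then have "\<kappa> = Suc (length w)"
      using Cons.prems(2,3) by fastforce
    with apath_level_SucI[OF inv Q, of 0 w \<kappa> x e1 e2] x True show ?thesis by simp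
  next
    case False
    then have \<kappa>: "\<kappa> \<le> length w"
      using Cons.prems(2,3) by (cases "\<kappa> = Suc (length w)") auto
    have "\<forall>j \<le> length w - \<kappa>. accepting_cut bar A1 A2 e1 e2 w j \<longleftrightarrow> j = length w - \<kappa>"
    proof (intro allI impI)
      fix j
      assume "j \<le> length w - \<kappa>"
      then show "accepting_cut bar A1 A2 e1 e2 w j \<longleftrightarrow> j = length w - \<kappa>"
        using Cons.prems(3)[rule_format, of "Suc j"] \<kappa> by (simp add: Suc_diff_le)
    qed
    with Cons.IH[OF Q \<kappa> _ x] False show ?thesis by simp
  qed
  ultimately show ?case
    unfolding apath_Cons_iff by blast
qed (use \<open>0 < \<kappa>\<close> in simp)

definition mu_of :: "('a \<Rightarrow> 'a) \<Rightarrow> nat \<Rightarrow> ('q1, 'a) dfa \<Rightarrow> ('q2, 'a) dfa \<Rightarrow> 'a list \<Rightarrow> 'a list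
    \<Rightarrow> ('q1, 'q2) bridge \<times> ('q1, 'q2) bridge" where
  "mu_of bar \<kappa> A1 A2 v \<beta> =
    (((fst (snd A1), fst (snd A2)),
       run (fst A1) (fst (snd A1)) (v @ \<beta> @ wbar bar v),
       run (fst A2) (fst (snd A2)) (v @ wbar bar \<beta> @ wbar bar v), 0),
     ((run (fst A1) (fst (snd A1)) v, run (fst A2) (fst (snd A2)) v),
       run (fst A1) (fst (snd A1)) (v @ \<beta>), run (fst A2) (fst (snd A2)) (v @ wbar bar \<beta>), \<kappa>))"

lemma index_iff_mu_of:
  assumes inv: "\<And>a. bar (bar a) = a" and "0 < \<kappa>"
  shows "\<mu> \<in> init_states bar \<kappa> A1 A2 \<times> final_states bar \<kappa> A1 A2 \<and>
      \<beta> \<in> Bmu bar A1 A2 \<mu> \<and> v \<in> Rmu bar \<kappa> A1 A2 \<mu> \<longleftrightarrow>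
    \<mu> = mu_of bar \<kappa> A1 A2 v \<beta> \<and> \<kappa> \<le> length v \<and>
    (\<forall>j \<le> length v - \<kappa>. accepting_cut bar A1 A2 (run (fst A1) (fst (snd A1)) (v @ \<beta>))
        (run (fst A2) (fst (snd A2)) (v @ wbar bar \<beta>)) v j \<longleftrightarrow> j = length v - \<kappa>)"
    (is "?index \<longleftrightarrow> ?canonical")
proof
  assume ?index
  then obtain q1 q2 d1 d2 e1 e2 where
    \<mu>: "\<mu> = (((fst (snd A1), fst (snd A2)), q1, q2, 0), ((d1, d2), e1, e2, \<kappa>))"
    and path: "apath bar \<kappa> A1 A2 ((fst (snd A1), fst (snd A2)), q1, q2, 0) v ((d1, d2), e1, e2, \<kappa>)"
    and \<beta>: "\<beta> \<in> Bset bar A1 A2 d1 d2 e1 e2"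
    by (auto simp: init_states_def final_states_def Bmu_def Rmu_def)
  show ?canonical
    using apath_states[OF path] apath_level_0[OF path \<open>0 < \<kappa>\<close>] \<beta>
    by (simp add: \<mu> mu_of_def Bset_eq)
next
  let ?p1 = "fst (snd A1)" and ?p2 = "fst (snd A2)"
  let ?e1 = "run (fst A1) ?p1 (v @ \<beta>)" and ?e2 = "run (fst A2) ?p2 (v @ wbar bar \<beta>)"
  assume ?canonical
  then have \<mu>: "\<mu> = mu_of bar \<kappa> A1 A2 v \<beta>" and \<kappa>: "\<kappa> \<le> length v"
    and cut: "\<forall>j \<le> length v - \<kappa>. accepting_cut bar A1 A2 ?e1 ?e2 v j \<longleftrightarrow> j = length v - \<kappa>"
    by simp_all
  have \<beta>: "\<beta> \<in> Bset bar A1 A2 (run (fst A1) ?p1 v) (run (fst A2) ?p2 v) ?e1 ?e2"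
    by (simp add: Bset_eq)
  have "apath bar \<kappa> A1 A2 ((?p1, ?p2), run (fst A1) ?e1 (wbar bar v), run (fst A2) ?e2 (wbar bar v), 0) v
      ((run (fst A1) ?p1 v, run (fst A2) ?p2 v), ?e1, ?e2, \<kappa>)"
    using apath_level_0I[OF inv \<open>0 < \<kappa>\<close> Q12_init \<kappa> cut \<beta>] .
  moreover have "is_bridge bar \<kappa> A1 A2 ((?p1, ?p2), run (fst A1) ?e1 (wbar bar v), run (fst A2) ?e2 (wbar bar v), 0)"
    using is_bridge_run[OF inv Q12_init _ \<beta>] by simp
  moreover have "is_bridge bar \<kappa> A1 A2 ((run (fst A1) ?p1 v, run (fst A2) ?p2 v), ?e1, ?e2, \<kappa>)"
    using Q12_run[OF Q12_init[of A1 A2], of v] \<beta> by (auto simp: is_bridge_def)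
  ultimately show ?index
    using \<beta> by (simp add: \<mu> mu_of_def init_states_def final_states_def Bmu_def Rmu_def)
qed

lemma min_gap_prefix_iff_accepting_cut:
  assumes inv: "\<And>a. bar (bar a) = a" and "lang A1 = L1" and "lang A2 = wbar bar ` L2"
  shows "min_gap_prefix bar \<kappa> L1 L2 v \<beta> \<longleftrightarrow> \<kappa> \<le> length v \<and>
    (\<forall>j \<le> length v - \<kappa>. accepting_cut bar A1 A2 (run (fst A1) (fst (snd A1)) (v @ \<beta>))
        (run (fst A2) (fst (snd A2)) (v @ wbar bar \<beta>)) v j \<longleftrightarrow> j = length v - \<kappa>)"
proof -
  have L1: "w \<in> L1 \<longleftrightarrow> run (fst A1) (fst (snd A1)) w \<in> snd (snd A1)" for w
    using assms(2) by (auto simp: lang_eq)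
  have L2: "w \<in> L2 \<longleftrightarrow> run (fst A2) (fst (snd A2)) (wbar bar w) \<in> snd (snd A2)" for w
    using assms(3) wbar_mem_image_iff[OF inv, of w L2] by (auto simp: lang_eq)
  have "accepting_cut bar A1 A2 (run (fst A1) (fst (snd A1)) (v @ \<beta>))
        (run (fst A2) (fst (snd A2)) (v @ wbar bar \<beta>)) v j \<longleftrightarrow>
      (\<exists>\<alpha> \<beta>'. valid_fact bar \<kappa> L1 L2 (v @ \<beta> @ wbar bar v) (take j v) \<alpha> \<beta>')"
    if "\<kappa> \<le> length v" and "j \<le> length v - \<kappa>" for j
    using that by (simp add: accepting_cut_def L1 L2 wbar_wbar[OF inv] valid_fact_take_iff)
  then show ?thesis
    unfolding min_gap_prefix_def by auto
qed

lemma index_iff_min_gap_prefix: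
  assumes "\<And>a. bar (bar a) = a" and "0 < \<kappa>" and "lang A1 = L1" and "lang A2 = wbar bar ` L2"
  shows "\<mu> \<in> init_states bar \<kappa> A1 A2 \<times> final_states bar \<kappa> A1 A2 \<and>
      \<beta> \<in> Bmu bar A1 A2 \<mu> \<and> v \<in> Rmu bar \<kappa> A1 A2 \<mu> \<longleftrightarrow>
    \<mu> = mu_of bar \<kappa> A1 A2 v \<beta> \<and> min_gap_prefix bar \<kappa> L1 L2 v \<beta>"
  unfolding index_iff_mu_of[OF assms(1,2)] min_gap_prefix_iff_accepting_cut[OF assms(1,3,4)] ..

theorem lemma1:
  fixes bar :: "'a::finite \<Rightarrow> 'a" and \<kappa> :: nat and L1 L2 :: "'a list set"
    and A1 :: "('q1::finite, 'a) dfa" and A2 :: "('q2::finite, 'a) dfa"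
  assumes "card (UNIV :: 'a set) \<ge> 2"
    and "\<And>a. bar (bar a) = a"
    and "\<kappa> > 0"
    and "lang A1 = L1"
    and "lang A2 = wbar bar ` L2"
  defines "M \<equiv> init_states bar \<kappa> A1 A2 \<times> final_states bar \<kappa> A1 A2"
  shows "Hk bar \<kappa> L1 L2 = (\<Union>\<mu>\<in>M. Bpow bar (Bmu bar A1 A2 \<mu>) (Rmu bar \<kappa> A1 A2 \<mu>)) \<and>
      disjoint_family_on (\<lambda>\<mu>. Bpow bar (Bmu bar A1 A2 \<mu>) (Rmu bar \<kappa> A1 A2 \<mu>)) M \<and>
      (\<forall>\<mu>\<in>M. \<forall>\<beta>\<in>Bmu bar A1 A2 \<mu>. \<forall>v\<in>Rmu bar \<kappa> A1 A2 \<mu>.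
           min_gap bar \<kappa> L1 L2 (v @ \<beta> @ wbar bar v) = v)"
proof -
  note index = index_iff_min_gap_prefix[OF assms(2-5), folded M_def]
  let ?part = "\<lambda>\<mu>. Bpow bar (Bmu bar A1 A2 \<mu>) (Rmu bar \<kappa> A1 A2 \<mu>)"
  have "Hk bar \<kappa> L1 L2 \<subseteq> (\<Union>\<mu>\<in>M. ?part \<mu>)"
  proof
    fix \<pi>
    assume "\<pi> \<in> Hk bar \<kappa> L1 L2"
    then obtain v \<beta> where "\<pi> = v @ \<beta> @ wbar bar v" and "min_gap_prefix bar \<kappa> L1 L2 v \<beta>"
      by (rule Hk_min_gap_prefix)
    with index[of "mu_of bar \<kappa> A1 A2 v \<beta>" \<beta> v] show "\<pi> \<in> (\<Union>\<mu>\<in>M. ?part \<mu>)"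
      unfolding Bpow_def by blast
  qed
  moreover have "(\<Union>\<mu>\<in>M. ?part \<mu>) \<subseteq> Hk bar \<kappa> L1 L2"
    using index min_gap_prefix_Hk unfolding Bpow_def by blast
  moreover have "disjoint_family_on ?part M"
    unfolding disjoint_family_on_def
  proof (intro ballI impI equals0I)
    fix \<mu> \<mu>' \<pi>
    assume "\<mu> \<in> M" "\<mu>' \<in> M" "\<mu> \<noteq> \<mu>'" and "\<pi> \<in> ?part \<mu> \<inter> ?part \<mu>'"
    then obtain v \<beta> v' \<beta>' where "\<mu> = mu_of bar \<kappa> A1 A2 v \<beta>" "\<mu>' = mu_of bar \<kappa> A1 A2 v' \<beta>'"
      and "min_gap_prefix bar \<kappa> L1 L2 v \<beta>" "min_gap_prefix bar \<kappa> L1 L2 v' \<beta>'"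
      and "v @ \<beta> @ wbar bar v = v' @ \<beta>' @ wbar bar v'"
      using index unfolding Bpow_def by blast
    with \<open>\<mu> \<noteq> \<mu>'\<close> show False
      using min_gap_prefix_unique by metis
  qed
  moreover have "\<forall>\<mu>\<in>M. \<forall>\<beta>\<in>Bmu bar A1 A2 \<mu>. \<forall>v\<in>Rmu bar \<kappa> A1 A2 \<mu>.
      min_gap bar \<kappa> L1 L2 (v @ \<beta> @ wbar bar v) = v"
    using index min_gap_eqI by blast
  ultimately show ?thesis
    by blast
qed

end
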